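(* Let $f,g\in\mathcal{H}$ and let $\alpha>0$ be real. Then the germ of $x\mapsto f(x)^{\alpha g(x)}=\exp\big(\alpha\, g(x)\ln f(x)\big)$ belongs to $\mathcal{H}$.
   Context: All functions are real-valued functions defined on some interval $(a,\infty)$. Two such functions are identified if they agree for all sufficiently large $x$; these equivalence classes are germs at $+\infty$. Write $\ln^{(k)}$ for the $k$-fold iterated natural logarithm, with $\ln^{(0)}(x)=x$. Let $\mathcal{H}$ be the smallest set of germs at $+\infty$ satisfying: (i) $\ln^{(k)}\in\mathcal{H}$ for every integer $k\ge0$; (ii) if $f\in\mathcal{H}$, then $\exp\circ f\in\mathcal{H}$, and if moreover $f$ is eventually positive, then $f^\alpha\in\mathcal{H}$ for every real $\alpha>0$; (iii) if $f,g\in\mathcal{H}$ and $f\ne g$ (as germs), then $fg\in\mathcal{H}$; (iv) if $f,g\in\mathcal{H}$ and $f(x)/g(x)\to+\infty$, then $f/g\in\mathcal{H}$. (Every element of $\mathcal{H}$ tends to $+\infty$, so $\ln f$ is eventually defined.) *)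

theory Defs
  imports Complex_Main
begin

text \<open>Germs at +infinity are represented by total functions real => real;
  the set H below is closed under eventual equality (rule H_germ), so it is
  the preimage of the smallest set of germs with the stated closure
  properties.\<close>

inductive H :: "(real \<Rightarrow> real) \<Rightarrow> bool" where
  H_ln_iter: "H (\<lambda>x. (ln ^^ k) x)"
| H_exp: "H f \<Longrightarrow> H (\<lambda>x. exp (f x))"
| H_powr: "H f \<Longrightarrow> eventually (\<lambda>x. f x > 0) at_top \<Longrightarrow> (\<alpha>::real) > 0
            \<Longrightarrow> H (\<lambda>x. f x powr \<alpha>)"
| H_mult: "H f \<Longrightarrow> H g \<Longrightarrow> \<not> eventually (\<lambda>x. f x = g x) at_top
            \<Longrightarrow> H (\<lambda>x. f x * g x)"
| H_div: "H f \<Longrightarrow> H g \<Longrightarrow> filterlim (\<lambda>x. f x / g x) at_top at_top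
            \<Longrightarrow> H (\<lambda>x. f x / g x)"
| H_germ: "H f \<Longrightarrow> eventually (\<lambda>x. f x = g x) at_top \<Longrightarrow> H g"

end

theory Submission
  imports Defs
begin

text \<open>
  Every germ in H tends to +infinity, hence is eventually positive.
  Call f "pow_closed" if for all g in H and all real alpha > 0
  the germ exp (alpha * g * ln f) = f powr (alpha * g) lies in H.  We show by
  induction on the generation of f in H that every f in H has this property:
  \<^item> for f = ln^(k) and f = exp o f0 the logarithm ln f is itself in H
    (namely ln^(k+1) resp. f0), and exp (alpha * u * v) is in H whenever u, v are;
  \<^item> for f0 powr beta the exponent is rescaled: alpha * g * ln (f0 powr beta)
    = (alpha * beta) * g * ln f0;
  \<^item> for products and quotients, exp (alpha * g * ln (f1 * f2)) splits into the
    product (resp. quotient) of the two powers, to which rule (iii) (resp. (iv))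
    of the definition applies;
  \<^item> eventual equality of f is inherited by the power.
\<close>

lemma H_tendsto_at_top:
  assumes "H f"
  shows "filterlim f at_top at_top"
  using assms
proof (induction rule: H.induct)
  case (H_ln_iter k)
  show ?case
  proof (induction k)
    case 0
    then show ?case by (simp add: filterlim_ident)
  next
    case (Suc k)
    show ?case
      using filterlim_compose[OF ln_at_top Suc.IH] by simp
  qed
next
  case (H_exp f)
  then show ?case using filterlim_compose[OF exp_at_top] by blast
next
  case (H_powr f \<alpha>)
  have "filterlim (\<lambda>x. \<alpha> * ln (f x)) at_top at_top"
    using filterlim_tendsto_pos_mult_at_top[OF tendsto_const H_powr.hyps(3)
        filterlim_compose[OF ln_at_top H_powr.IH]] .
  then have "filterlim (\<lambda>x. exp (\<alpha> * ln (f x))) at_top at_top"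
    by (rule filterlim_compose[OF exp_at_top])
  moreover have "eventually (\<lambda>x. exp (\<alpha> * ln (f x)) = f x powr \<alpha>) at_top"
    using H_powr.hyps(2) by eventually_elim (simp add: powr_def mult_ac)
  ultimately show ?case by (simp add: filterlim_cong)
next
  case (H_mult f g)
  then show ?case using filterlim_at_top_mult_at_top by blast
next
  case (H_div f g)
  then show ?case by simp
next
  case (H_germ f g)
  then show ?case using filterlim_cong by blast
qed

lemma H_eventually_pos:
  assumes "H f"
  shows "eventually (\<lambda>x. f x > 0) at_top"
  using H_tendsto_at_top[OF assms] filterlim_at_top_dense by blast

text \<open>H is closed under arbitrary products: rule (iii) covers distinct factors,
  and the square of f is the positive power f powr 2.\<close>

lemma H_times:
  assumes u: "H u" and v: "H v"
  shows "H (\<lambda>x. u x * v x)"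
proof (cases "eventually (\<lambda>x. u x = v x) at_top")
  case True
  have "H (\<lambda>x. u x powr 2)"
    using H_powr[OF u H_eventually_pos[OF u]] by simp
  moreover have "eventually (\<lambda>x. u x powr 2 = u x * v x) at_top"
    using True H_eventually_pos[OF u]
    by eventually_elim (simp add: powr_numeral power2_eq_square)
  ultimately show ?thesis by (rule H_germ)
next
  case False
  then show ?thesis using H_mult[OF u v] by blast
qed

text \<open>exp (alpha * u * v) = (exp (u * v)) powr alpha lies in H for u, v in H.\<close>

lemma H_exp_scaled_times:
  assumes u: "H u" and v: "H v" and \<alpha>: "\<alpha> > 0"
  shows "H (\<lambda>x. exp (\<alpha> * u x * v x))"
proof -
  have "H (\<lambda>x. exp (u x * v x) powr \<alpha>)"
    using H_powr[OF H_exp[OF H_times[OF u v]] _ \<alpha>] by simp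
  moreover have "(\<lambda>x. exp (u x * v x) powr \<alpha>) = (\<lambda>x. exp (\<alpha> * u x * v x))"
    by (simp add: powr_def mult_ac)
  ultimately show ?thesis by simp
qed

definition pow_closed :: "(real \<Rightarrow> real) \<Rightarrow> bool" where
  "pow_closed f \<longleftrightarrow>
     (\<forall>g \<alpha>. H g \<longrightarrow> \<alpha> > 0 \<longrightarrow> H (\<lambda>x. exp (\<alpha> * g x * ln (f x))))"

lemma pow_closedI:
  assumes "\<And>g \<alpha>. H g \<Longrightarrow> \<alpha> > 0 \<Longrightarrow> H (\<lambda>x. exp (\<alpha> * g x * ln (f x)))"
  shows "pow_closed f"
  using assms unfolding pow_closed_def by blast

lemma pow_closedD:
  "pow_closed f \<Longrightarrow> H g \<Longrightarrow> \<alpha> > 0 \<Longrightarrow> H (\<lambda>x. exp (\<alpha> * g x * ln (f x)))"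
  unfolding pow_closed_def by blast

lemma pow_closed_if_ln_in_H:
  assumes "H (\<lambda>x. ln (f x))"
  shows "pow_closed f"
  using H_exp_scaled_times[OF _ assms] by (intro pow_closedI)

lemma pow_closed_ln_iter: "pow_closed (\<lambda>x. (ln ^^ k) x)"
  using pow_closed_if_ln_in_H[of "ln ^^ k"] H_ln_iter[of "Suc k"] by simp

lemma pow_closed_exp:
  assumes "H f"
  shows "pow_closed (\<lambda>x. exp (f x))"
  using pow_closed_if_ln_in_H assms by simp

lemma pow_closed_powr:
  assumes f: "pow_closed f" and pos: "eventually (\<lambda>x. f x > 0) at_top" and \<beta>: "\<beta> > 0"
  shows "pow_closed (\<lambda>x. f x powr \<beta>)"
proof (rule pow_closedI)
  fix g and \<alpha> :: real
  assume g: "H g" and \<alpha>: "\<alpha> > 0"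
  have "H (\<lambda>x. exp ((\<alpha> * \<beta>) * g x * ln (f x)))"
    using pow_closedD[OF f g] \<alpha> \<beta> by simp
  moreover have "eventually (\<lambda>x. exp ((\<alpha> * \<beta>) * g x * ln (f x)) =
      exp (\<alpha> * g x * ln (f x powr \<beta>))) at_top"
    using pos by eventually_elim (simp add: ln_powr mult_ac)
  ultimately show "H (\<lambda>x. exp (\<alpha> * g x * ln (f x powr \<beta>)))" by (rule H_germ)
qed

text \<open>Since t \<mapsto> exp (c * ln t) is injective on t > 0 for c > 0, distinct
  germs f1, f2 give distinct powers, as required by rule (iii).\<close>

lemma powers_not_eventually_equal:
  assumes g: "H g" and \<alpha>: "\<alpha> > 0"
    and pos1: "eventually (\<lambda>x. f1 x > 0) at_top"
    and pos2: "eventually (\<lambda>x. f2 x > 0) at_top"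
    and ne: "\<not> eventually (\<lambda>x. f1 x = f2 x) at_top"
  shows "\<not> eventually (\<lambda>x. exp (\<alpha> * g x * ln (f1 x)) = exp (\<alpha> * g x * ln (f2 x))) at_top"
proof
  assume "eventually (\<lambda>x. exp (\<alpha> * g x * ln (f1 x)) = exp (\<alpha> * g x * ln (f2 x))) at_top"
  with pos1 pos2 H_eventually_pos[OF g]
  have "eventually (\<lambda>x. f1 x = f2 x) at_top"
    by eventually_elim (use \<alpha> in auto)
  with ne show False by contradiction
qed

lemma pow_closed_mult:
  assumes f1: "H f1" "pow_closed f1" and f2: "H f2" "pow_closed f2"
    and ne: "\<not> eventually (\<lambda>x. f1 x = f2 x) at_top"
  shows "pow_closed (\<lambda>x. f1 x * f2 x)"
proof (rule pow_closedI)
  fix g and \<alpha> :: real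
  assume g: "H g" and \<alpha>: "\<alpha> > 0"
  note pos1 = H_eventually_pos[OF f1(1)] and pos2 = H_eventually_pos[OF f2(1)]
  have "H (\<lambda>x. exp (\<alpha> * g x * ln (f1 x)) * exp (\<alpha> * g x * ln (f2 x)))"
    using H_mult[OF pow_closedD[OF f1(2) g \<alpha>] pow_closedD[OF f2(2) g \<alpha>]
        powers_not_eventually_equal[OF g \<alpha> pos1 pos2 ne]] .
  moreover have "eventually (\<lambda>x. exp (\<alpha> * g x * ln (f1 x)) * exp (\<alpha> * g x * ln (f2 x)) =
      exp (\<alpha> * g x * ln (f1 x * f2 x))) at_top"
    using pos1 pos2 by eventually_elim (simp add: ln_mult distrib_left exp_add)
  ultimately show "H (\<lambda>x. exp (\<alpha> * g x * ln (f1 x * f2 x)))" by (rule H_germ)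
qed

text \<open>For the quotient, the power of f1 / f2 tends to +infinity because
  f1 / f2 does and g is eventually large, so rule (iv) applies.\<close>

lemma pow_closed_div:
  assumes f1: "H f1" "pow_closed f1" and f2: "H f2" "pow_closed f2"
    and lim: "filterlim (\<lambda>x. f1 x / f2 x) at_top at_top"
  shows "pow_closed (\<lambda>x. f1 x / f2 x)"
proof (rule pow_closedI)
  fix g and \<alpha> :: real
  assume g: "H g" and \<alpha>: "\<alpha> > 0"
  let ?P = "\<lambda>h x. exp (\<alpha> * g x * ln (h x))"
  have eq: "eventually (\<lambda>x. ?P f1 x / ?P f2 x = ?P (\<lambda>x. f1 x / f2 x) x) at_top"
    using H_eventually_pos[OF f1(1)] H_eventually_pos[OF f2(1)]
    by eventually_elim (simp add: ln_div right_diff_distrib exp_diff)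
  have "filterlim (\<lambda>x. g x * ln (f1 x / f2 x)) at_top at_top"
    using filterlim_at_top_mult_at_top[OF H_tendsto_at_top[OF g]
        filterlim_compose[OF ln_at_top lim]] .
  then have "filterlim (\<lambda>x. exp (\<alpha> * (g x * ln (f1 x / f2 x)))) at_top at_top"
    using filterlim_compose[OF exp_at_top filterlim_tendsto_pos_mult_at_top[OF tendsto_const \<alpha>]]
    by blast
  then have "filterlim (\<lambda>x. ?P f1 x / ?P f2 x) at_top at_top"
    using filterlim_cong[OF refl refl eq] by (simp add: mult_ac)
  then have "H (\<lambda>x. ?P f1 x / ?P f2 x)"
    by (rule H_div[OF pow_closedD[OF f1(2) g \<alpha>] pow_closedD[OF f2(2) g \<alpha>]])
  then show "H (?P (\<lambda>x. f1 x / f2 x))" using eq by (rule H_germ)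
qed

lemma pow_closed_germ:
  assumes f: "pow_closed f" and eq: "eventually (\<lambda>x. f x = f' x) at_top"
  shows "pow_closed f'"
proof (rule pow_closedI)
  fix g and \<alpha> :: real
  assume "H g" "\<alpha> > 0"
  then have "H (\<lambda>x. exp (\<alpha> * g x * ln (f x)))" by (rule pow_closedD[OF f])
  moreover have "eventually (\<lambda>x. exp (\<alpha> * g x * ln (f x)) = exp (\<alpha> * g x * ln (f' x))) at_top"
    using eq by eventually_elim simp
  ultimately show "H (\<lambda>x. exp (\<alpha> * g x * ln (f' x)))" by (rule H_germ)
qed

lemma H_pow_closed:
  assumes "H f"
  shows "pow_closed f"
  using assms
proof (induction rule: H.induct)
  case (H_ln_iter k)
  show ?case by (rule pow_closed_ln_iter)
next
  case (H_exp f)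
  show ?case by (rule pow_closed_exp[OF H_exp.hyps])
next
  case (H_powr f \<beta>)
  show ?case by (rule pow_closed_powr[OF H_powr.IH H_powr.hyps(2,3)])
next
  case (H_mult f1 f2)
  show ?case
    by (rule pow_closed_mult[OF H_mult.hyps(1) H_mult.IH(1) H_mult.hyps(2) H_mult.IH(2)
          H_mult.hyps(3)])
next
  case (H_div f1 f2)
  show ?case
    by (rule pow_closed_div[OF H_div.hyps(1) H_div.IH(1) H_div.hyps(2) H_div.IH(2)
          H_div.hyps(3)])
next
  case (H_germ f f')
  show ?case by (rule pow_closed_germ[OF H_germ.IH H_germ.hyps(2)])
qed

theorem mainTheorem5:
  fixes f g :: "real \<Rightarrow> real" and \<alpha> :: real
  assumes "H f" and "H g" and "\<alpha> > 0"
  shows "H (\<lambda>x. exp (\<alpha> * g x * ln (f x)))"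
  using pow_closedD[OF H_pow_closed[OF assms(1)] assms(2,3)] .

end
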